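(* Assume the Nemytskii operator $\mathcal G(\boldsymbol\zeta)=\mathbf g(\cdot,\boldsymbol\zeta(\cdot))$ maps $L_t^2(\Gamma)$ into itself with $\|\mathcal G(\boldsymbol\zeta_1)-\mathcal G(\boldsymbol\zeta_2)\|_{L^2(\Gamma)}\le L_g\|\boldsymbol\zeta_1-\boldsymbol\zeta_2\|_{L^2(\Gamma)}$ for all $\boldsymbol\zeta_1,\boldsymbol\zeta_2\in L_t^2(\Gamma)$. If $C_{\rm tr}L_g<1$, then there is a unique $\mathbf E\in\mathbf X(\Omega)$ with $\mathcal A^{\rm tr}(\mathbf E;\mathbf V)=\langle\mathbf F^{\rm tr},\mathbf V\rangle$ for all $\mathbf V\in\mathbf X(\Omega)$, where $$\mathcal A^{\rm tr}(\mathbf E;\mathbf V)=\int_\Omega\big[\mu_r^{-1}(\nabla\times\mathbf E)\cdot(\nabla\times\overline{\mathbf V})-k^2\varepsilon_r\mathbf E\cdot\overline{\mathbf V}\big]d\boldsymbol x-\int_\Gamma\mathbf g(\cdot,\gamma_T\mathbf E)\cdot\gamma_T\overline{\mathbf V}\,ds+ik\langle\Lambda\gamma_t\mathbf E,\gamma_T\overline{\mathbf V}\rangle_{\Gamma_R}.$$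
   Context: Let $k>0$, $\varepsilon_0,\mu_0>0$, $\omega>0$. Let $D\subset\mathbb R^3$ be a bounded Lipschitz domain, $\Gamma=\partial D$, $\mathbf n$ the unit normal pointing out of $D$. Let $B_R$ be an open ball with $\overline D\subset B_R$, $\Gamma_R=\partial B_R$, and $\Omega=B_R$. $\mu_r=\mu_D/\mu_0$ in $D$, $=1$ outside; $\varepsilon_r=\varepsilon_0^{-1}(\varepsilon_D+i\sigma_D/\omega)$ in $D$, $=1$ outside, with $\mu_D,\varepsilon_D>0,\sigma_D\ge0$. Incident field $\mathbf E^i=\mathbf p e^{ik\mathbf d\cdot\boldsymbol x}$, $\mathbf d\in\mathbb S^2$, $\mathbf p\cdot\mathbf d=0$. $\gamma_t\mathbf u=\mathbf n\times\mathbf u$, $\gamma_T\mathbf u=\mathbf n\times(\mathbf u\times\mathbf n)$. $\Lambda$ is the electromagnetic Calderón operator on $\Gamma_R$ ($\Lambda\boldsymbol\xi=\gamma_t((ik)^{-1}\nabla\times\mathbf W)$ with $\mathbf W$ radiating solution of $\nabla\times\nabla\times\mathbf W-k^2\mathbf W=0$ outside $\overline{B_R}$, $\gamma_t\mathbf W=\boldsymbol\xi$), and $\langle\cdot,\cdot\rangle_{\Gamma_R}$ the $H^{-1/2}(\operatorname{div}_{\Gamma_R})$–$H^{-1/2}(\operatorname{curl}_{\Gamma_R})$ duality. $L_t^2(\Gamma)$: tangential $L^2$ fields. $\mathbf X(\Omega)=\{\mathbf E\in H(\operatorname{curl};\Omega):\gamma_T\mathbf E|_\Gamma\in L_t^2(\Gamma)\}$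 (the common tangential trace on $\Gamma$), with norm $\|\mathbf E\|^2_{H(\operatorname{curl})}+\|\gamma_T\mathbf E\|^2_{L^2(\Gamma)}$. $\langle\mathbf F^{\rm tr},\mathbf V\rangle=\langle ik\Lambda(\gamma_t\mathbf E^i)-\gamma_t(\nabla\times\mathbf E^i),\gamma_T\overline{\mathbf V}\rangle_{\Gamma_R}$. $\mathbf g:\Gamma\times\mathbb C^3\to\mathbb C^3$ Carathéodory and tangential. Standing fact: with $\langle\mathscr A_l^{\rm tr}\mathbf E,\mathbf V\rangle=\int_\Omega[\mu_r^{-1}(\nabla\times\mathbf E)\cdot(\nabla\times\overline{\mathbf V})-k^2\varepsilon_r\mathbf E\cdot\overline{\mathbf V}]d\boldsymbol x+ik\langle\Lambda\gamma_t\mathbf E,\gamma_T\overline{\mathbf V}\rangle_{\Gamma_R}$, for every $\mathbf f\in L_t^2(\Gamma)$ the problem $\langle\mathscr A^{\rm tr}_l\mathbf E,\mathbf V\rangle=\langle\mathbf F^{\rm tr},\mathbf V\rangle+\int_\Gamma\mathbf f\cdot\gamma_T\overline{\mathbf V}ds$ $\forall\mathbf V\in\mathbf X(\Omega)$ has a unique solution in $\mathbf X(\Omega)$, and solutions for data $\mathbf f_1,\mathbf f_2$ satisfy $\|\mathbf E_1-\mathbf E_2\|_{\mathbf X(\Omega)}\le C_{\rm tr}\|\mathbf f_1-\mathbf f_2\|_{L^2(\Gamma)}$. *)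

theory Defs
  imports "HOL-Analysis.Analysis"
begin

(* Abstract rendering of the setting.
   'x   : the space X(Omega)  (Banach, norm ||E||_X),
   'l   : the space L_t^2(Gamma),
   gT   : the tangential trace gamma_T : X(Omega) -> L_t^2(Gamma),
   Al   : the sesquilinear form <A_l^tr E, V>,
   Ftr  : the antilinear functional V |-> <F^tr, V>,
   bG   : the boundary pairing (f, eta) |-> int_Gamma f . conj eta ds,
   G    : the Nemytskii operator zeta |-> g(., zeta(.)). *)

definition A_tr ::
  "('x \<Rightarrow> 'x \<Rightarrow> complex) \<Rightarrow> ('l \<Rightarrow> 'l \<Rightarrow> complex) \<Rightarrow> ('l \<Rightarrow> 'l)
   \<Rightarrow> ('x \<Rightarrow> 'l) \<Rightarrow> 'x \<Rightarrow> 'x \<Rightarrow> complex" where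
  "A_tr Al bG G gT E V = Al E V - bG (G (gT E)) (gT V)"

end

theory Submission
  imports Defs
begin

(* Moving the nonlinear boundary term to the right-hand side turns the problem into the
   fixed-point equation E = S (G (gT E)), where S is the solution operator of the linear
   problem. S is C_tr-Lipschitz by the stability estimate and G o gT is L_g-Lipschitz, so
   for C_tr L_g < 1 the composite is a contraction of the Banach space X(Omega) and the
   Banach fixed-point theorem gives existence and uniqueness. The hypotheses do not force
   C_tr, L_g >= 0, so Lipschitz constants are replaced by their positive parts. *)

lemma lipschitz_on_max_0:
  assumes "\<And>x y. x \<in> U \<Longrightarrow> y \<in> U \<Longrightarrow> dist (f x) (f y) \<le> L * dist x y"
  shows "(max 0 L)-lipschitz_on U f"
proof (rule lipschitz_onI)
  fix x y assume "x \<in> U" "y \<in> U"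
  then have "dist (f x) (f y) \<le> L * dist x y" by (rule assms)
  also have "\<dots> \<le> max 0 L * dist x y" by (simp add: mult_right_mono)
  finally show "dist (f x) (f y) \<le> max 0 L * dist x y" .
qed simp

lemma lipschitz_on_linear:
  assumes "linear T" "\<And>x. norm (T x) \<le> B * norm x" "0 \<le> B"
  shows "B-lipschitz_on U T"
proof (rule lipschitz_onI)
  fix x y
  show "dist (T x) (T y) \<le> B * dist x y"
    using assms(2)[of "x - y"] by (simp add: dist_norm linear_diff[OF assms(1)])
qed (fact assms(3))

lemma contraction_imp_unique_fixpoint:
  fixes S :: "'a::complete_space \<Rightarrow> 'a"
  assumes "c-lipschitz_on UNIV S" "c < 1"
  shows "\<exists>!x. S x = x"
  using assms by (intro banach_fix_type[of c]) (auto simp: lipschitz_on_def)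

lemma unique_solution_with_lipschitz_data:
  fixes P :: "'l::metric_space \<Rightarrow> 'x::complete_space \<Rightarrow> bool" and \<Phi> :: "'x \<Rightarrow> 'l"
  assumes unique: "\<And>f. \<exists>!E. P f E"
    and stable: "\<And>f1 f2 E1 E2. P f1 E1 \<Longrightarrow> P f2 E2 \<Longrightarrow> dist E1 E2 \<le> C * dist f1 f2"
    and \<Phi>: "L-lipschitz_on UNIV \<Phi>"
    and small: "C * L < 1"
  shows "\<exists>!E. P (\<Phi> E) E"
proof -
  define S where "S f = (THE E. P f E)" for f
  have S_solves: "P f (S f)" for f
    unfolding S_def by (rule theI'[OF unique])
  have solves_iff: "P f E \<longleftrightarrow> S f = E" for f E
  proof
    assume "P f E"
    then show "S f = E"
      unfolding S_def by (rule the1_equality[OF unique])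
  qed (use S_solves in blast)
  have "(max 0 C)-lipschitz_on (range \<Phi>) S"
    by (rule lipschitz_on_max_0) (rule stable[OF S_solves S_solves])
  with \<Phi> have "(max 0 C * L)-lipschitz_on UNIV (S \<circ> \<Phi>)"
    by (rule lipschitz_on_compose)
  moreover have "max 0 C * L < 1"
    using small lipschitz_on_nonneg[OF \<Phi>] by (cases "0 \<le> C") auto
  ultimately have "\<exists>!E. (S \<circ> \<Phi>) E = E"
    by (rule contraction_imp_unique_fixpoint)
  then show ?thesis
    unfolding solves_iff o_apply .
qed

lemma A_tr_eq_iff:
  "A_tr Al bG G gT E V = F \<longleftrightarrow> Al E V = F + bG (G (gT E)) (gT V)"
  unfolding A_tr_def by (simp add: diff_eq_eq)

theorem corollary2p4:
  fixes Al :: "'x::banach \<Rightarrow> 'x \<Rightarrow> complex"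
    and Ftr :: "'x \<Rightarrow> complex"
    and bG :: "'l::real_normed_vector \<Rightarrow> 'l \<Rightarrow> complex"
    and gT :: "'x \<Rightarrow> 'l"
    and G :: "'l \<Rightarrow> 'l"
    and C_tr L_g :: real
  assumes trace_linear: "linear gT"
    and trace_bound: "\<And>E. norm (gT E) \<le> norm E"
    and standing_exists_unique:
      "\<And>f. \<exists>!E. \<forall>V. Al E V = Ftr V + bG f (gT V)"
    and standing_stability:
      "\<And>f1 f2 E1 E2. (\<forall>V. Al E1 V = Ftr V + bG f1 (gT V)) \<Longrightarrow>
                     (\<forall>V. Al E2 V = Ftr V + bG f2 (gT V)) \<Longrightarrow>
                     norm (E1 - E2) \<le> C_tr * norm (f1 - f2)"
    and G_lipschitz: "\<And>z1 z2. norm (G z1 - G z2) \<le> L_g * norm (z1 - z2)"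
    and small: "C_tr * L_g < 1"
  shows "\<exists>!E. \<forall>V. A_tr Al bG G gT E V = Ftr V"
proof -
  have stable: "dist E1 E2 \<le> C_tr * dist f1 f2"
    if "\<forall>V. Al E1 V = Ftr V + bG f1 (gT V)" "\<forall>V. Al E2 V = Ftr V + bG f2 (gT V)"
    for f1 f2 E1 E2
    using standing_stability[OF that] by (simp add: dist_norm)
  have "1-lipschitz_on UNIV gT"
    by (rule lipschitz_on_linear[OF trace_linear]) (simp_all add: trace_bound)
  moreover have "(max 0 L_g)-lipschitz_on (range gT) G"
    by (rule lipschitz_on_max_0) (simp add: dist_norm G_lipschitz)
  ultimately have data_lipschitz: "(max 0 L_g * 1)-lipschitz_on UNIV (G \<circ> gT)"
    by (rule lipschitz_on_compose)
  have "C_tr * (max 0 L_g * 1) < 1"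
    using small by (cases "0 \<le> L_g") auto
  with standing_exists_unique stable data_lipschitz
  have "\<exists>!E. \<forall>V. Al E V = Ftr V + bG ((G \<circ> gT) E) (gT V)"
    by (rule unique_solution_with_lipschitz_data
        [where P = "\<lambda>f E. \<forall>V. Al E V = Ftr V + bG f (gT V)" and \<Phi> = "G \<circ> gT"])
  then show ?thesis
    unfolding A_tr_eq_iff o_apply .
qed

end
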